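(* Let $H$ be a connected graph containing a triangle, let $u$ be a vertex of $H$, and let $M$ be a unicyclic graph with unique cycle $C$. Let $r\ge |V(H)|+3$ and let $U$ be the set of vertices of $M$ at distance exactly $r$ from $C$. Then there is a homomorphism from $M$ to $H$ that maps every vertex of $U$ to $u$.
   Context: Graphs are simple and loopless. A homomorphism from $M$ to $H$ is a map $h:V(M)\to V(H)$ sending every edge to an edge. A graph is unicyclic if it contains exactly one cycle. The distance from a vertex to a set of vertices is the minimum length of a path from the vertex to a vertex of the set. *)

theory Defs
  imports Main
begin

definition graph :: "'a set \<Rightarrow> 'a set set \<Rightarrow> bool" where
  "graph V E \<longleftrightarrow> finite V \<and> (\<forall>e\<in>E. \<exists>x y. e = {x, y} \<and> x \<noteq> y \<and> x \<in> V \<and> y \<in> V)"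

definition walk :: "'a set \<Rightarrow> 'a set set \<Rightarrow> 'a list \<Rightarrow> bool" where
  "walk V E xs \<longleftrightarrow> xs \<noteq> [] \<and> set xs \<subseteq> V \<and>
     (\<forall>i. Suc i < length xs \<longrightarrow> {xs ! i, xs ! Suc i} \<in> E)"

definition path :: "'a set \<Rightarrow> 'a set set \<Rightarrow> 'a list \<Rightarrow> bool" where
  "path V E xs \<longleftrightarrow> walk V E xs \<and> distinct xs"

definition connected_graph :: "'a set \<Rightarrow> 'a set set \<Rightarrow> bool" where
  "connected_graph V E \<longleftrightarrow> V \<noteq> {} \<and>
     (\<forall>x\<in>V. \<forall>y\<in>V. \<exists>xs. path V E xs \<and> hd xs = x \<and> last xs = y)"

definition has_triangle :: "'a set \<Rightarrow> 'a set set \<Rightarrow> bool" where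
  "has_triangle V E \<longleftrightarrow> (\<exists>a\<in>V. \<exists>b\<in>V. \<exists>c\<in>V. a \<noteq> b \<and> b \<noteq> c \<and> a \<noteq> c \<and>
     {a, b} \<in> E \<and> {b, c} \<in> E \<and> {a, c} \<in> E)"

definition cycle_list :: "'a set \<Rightarrow> 'a set set \<Rightarrow> 'a list \<Rightarrow> bool" where
  "cycle_list V E xs \<longleftrightarrow> path V E xs \<and> length xs \<ge> 3 \<and> {last xs, hd xs} \<in> E"

definition cycle_edges :: "'a list \<Rightarrow> 'a set set" where
  "cycle_edges xs = {{xs ! i, xs ! ((Suc i) mod length xs)} | i. i < length xs}"

definition cycles :: "'a set \<Rightarrow> 'a set set \<Rightarrow> ('a set \<times> 'a set set) set" where
  "cycles V E = {(set xs, cycle_edges xs) | xs. cycle_list V E xs}"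

definition unicyclic_with :: "'a set \<Rightarrow> 'a set set \<Rightarrow> ('a set \<times> 'a set set) \<Rightarrow> bool" where
  "unicyclic_with V E C \<longleftrightarrow> cycles V E = {C}"

definition dist_to :: "'a set \<Rightarrow> 'a set set \<Rightarrow> 'a \<Rightarrow> 'a set \<Rightarrow> nat \<Rightarrow> bool" where
  "dist_to V E v S n \<longleftrightarrow>
     (\<exists>xs. path V E xs \<and> hd xs = v \<and> last xs \<in> S \<and> length xs = Suc n) \<and>
     (\<forall>m<n. \<not> (\<exists>xs. path V E xs \<and> hd xs = v \<and> last xs \<in> S \<and> length xs = Suc m))"

definition graph_hom :: "'a set \<Rightarrow> 'a set set \<Rightarrow> 'b set \<Rightarrow> 'b set set \<Rightarrow> ('a \<Rightarrow> 'b) \<Rightarrow> bool" where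
  "graph_hom VM EM VH EH h \<longleftrightarrow> (\<forall>x\<in>VM. h x \<in> VH) \<and>
     (\<forall>x y. {x, y} \<in> EM \<longrightarrow> {h x, h y} \<in> EH)"

end

theory Submission
  imports Defs
begin

(* Every vertex of M gets a level: its walk
   distance to C if it can reach C, and otherwise its distance to a fixed root of its
   component (which is a tree).  Since M has only one cycle, every edge of M either joins a
   vertex to its unique neighbour one level lower (its parent) or is an edge of C.
   The homomorphism is built level by level: C is mapped properly onto the triangle of H, and
   a vertex of level k + 1 goes to a neighbour of the image of its parent chosen so that, as
   long as k + 1 <= r, the image still reaches u by a walk of exactly r - (k + 1) steps.
   This is possible because a triangle vertex reaches u by walks of every length
   >= |V(H)| + 1 (connectivity plus an odd cycle); vertices at level r then land on u. *)

fun walk_edges :: "'a list \<Rightarrow> 'a set set" where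
  "walk_edges (x # y # xs) = insert {x, y} (walk_edges (y # xs))"
| "walk_edges _ = {}"

definition walk_in :: "'a set set \<Rightarrow> 'a list \<Rightarrow> bool" where
  "walk_in E w \<longleftrightarrow> w \<noteq> [] \<and> walk_edges w \<subseteq> E"

lemma walk_edges_Cons: "xs \<noteq> [] \<Longrightarrow> walk_edges (x # xs) = insert {x, hd xs} (walk_edges xs)"
  by (cases xs) auto

lemma walk_edges_append:
  "xs \<noteq> [] \<Longrightarrow> ys \<noteq> [] \<Longrightarrow>
   walk_edges (xs @ ys) = walk_edges xs \<union> walk_edges ys \<union> {{last xs, hd ys}}"
  by (induction xs rule: walk_edges.induct) (auto simp: walk_edges_Cons)

lemma walk_edges_rev: "walk_edges (rev w) = walk_edges w"
proof (induction w)
  case (Cons x xs)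
  then show ?case
    by (cases "xs = []") (auto simp: walk_edges_append walk_edges_Cons last_rev insert_commute)
qed simp

lemma walk_edges_nth: "e \<in> walk_edges w \<longleftrightarrow> (\<exists>i. Suc i < length w \<and> e = {w ! i, w ! Suc i})"
proof (induction w rule: walk_edges.induct)
  case (1 x y xs)
  have "(\<exists>i. Suc i < length (x # y # xs) \<and> e = {(x # y # xs) ! i, (x # y # xs) ! Suc i}) \<longleftrightarrow>
        e = {x, y} \<or> (\<exists>j. Suc j < length (y # xs) \<and> e = {(y # xs) ! j, (y # xs) ! Suc j})"
    by (auto simp: less_Suc_eq_0_disj)
  then show ?case using "1.IH" by simp
qed auto

lemma walk_edges_subset_set: "e \<in> walk_edges w \<Longrightarrow> e \<subseteq> set w"
  by (induction w rule: walk_edges.induct) auto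

lemma walk_in_Cons: "xs \<noteq> [] \<Longrightarrow> walk_in E (x # xs) \<longleftrightarrow> {x, hd xs} \<in> E \<and> walk_in E xs"
  by (auto simp: walk_in_def walk_edges_Cons)

lemma walk_in_singleton [simp]: "walk_in E [x]"
  by (simp add: walk_in_def)

lemma walk_in_rev [simp]: "walk_in E (rev w) \<longleftrightarrow> walk_in E w"
  by (simp add: walk_in_def walk_edges_rev)

lemma walk_in_append:
  "xs \<noteq> [] \<Longrightarrow> ys \<noteq> [] \<Longrightarrow>
   walk_in E (xs @ ys) \<longleftrightarrow> walk_in E xs \<and> walk_in E ys \<and> {last xs, hd ys} \<in> E"
  by (auto simp: walk_in_def walk_edges_append)

lemma walk_in_suffix: "walk_in E (xs @ ys) \<Longrightarrow> ys \<noteq> [] \<Longrightarrow> walk_in E ys"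
  by (cases "xs = []") (auto simp: walk_in_append)

lemma walk_in_prefix: "walk_in E (xs @ ys) \<Longrightarrow> xs \<noteq> [] \<Longrightarrow> walk_in E xs"
  by (cases "ys = []") (auto simp: walk_in_append)

lemma walk_edges_mono_append: "walk_edges xs \<subseteq> walk_edges (xs @ ys)" "walk_edges ys \<subseteq> walk_edges (xs @ ys)"
  by (cases "xs = []"; cases "ys = []"; auto simp: walk_edges_append)+

lemma walk_join:
  assumes "walk_in E xs" "walk_in E ys" "last xs = hd ys"
  shows "walk_in E (xs @ tl ys)" and "walk_edges (xs @ tl ys) = walk_edges xs \<union> walk_edges ys"
    and "hd (xs @ tl ys) = hd xs" and "last (xs @ tl ys) = last ys"
proof -
  have ne: "xs \<noteq> []" "ys \<noteq> []" using assms by (auto simp: walk_in_def)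
  then obtain y ys' where ys: "ys = y # ys'" by (cases ys) auto
  show "walk_in E (xs @ tl ys)" "walk_edges (xs @ tl ys) = walk_edges xs \<union> walk_edges ys"
    using assms ne ys by (cases "ys' = []"; auto simp: walk_in_append walk_in_Cons walk_edges_append walk_edges_Cons)+
  show "hd (xs @ tl ys) = hd xs" using ne by simp
  show "last (xs @ tl ys) = last ys" using assms(3) ne ys by (cases "ys' = []") auto
qed

lemma walk_iff_walk_in: "walk V E xs \<longleftrightarrow> walk_in E xs \<and> set xs \<subseteq> V"
proof -
  have "walk_edges xs \<subseteq> E \<longleftrightarrow> (\<forall>i. Suc i < length xs \<longrightarrow> {xs ! i, xs ! Suc i} \<in> E)"
    unfolding subset_iff walk_edges_nth by blast
  then show ?thesis unfolding walk_def walk_in_def by blast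
qed

lemma path_iff_walk_in: "path V E xs \<longleftrightarrow> walk_in E xs \<and> distinct xs \<and> set xs \<subseteq> V"
  by (auto simp: path_def walk_iff_walk_in)

lemma graph_edge: "graph V E \<Longrightarrow> {x, y} \<in> E \<Longrightarrow> x \<in> V \<and> y \<in> V \<and> x \<noteq> y"
  unfolding graph_def by (metis doubleton_eq_iff)

lemma walk_in_vertices: "graph V E \<Longrightarrow> walk_in E w \<Longrightarrow> hd w \<in> V \<Longrightarrow> set w \<subseteq> V"
proof (induction w rule: walk_edges.induct)
  case (1 x y xs)
  then show ?case by (auto simp: walk_in_Cons dest: graph_edge)
qed (auto simp: walk_in_def)

lemma walk_shortcut:
  assumes "walk_in E w"
  obtains p where "walk_in E p" "distinct p" "hd p = hd w" "last p = last w"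
    "set p \<subseteq> set w" "walk_edges p \<subseteq> walk_edges w" "length p \<le> length w"
  using assms
proof (induction w arbitrary: thesis)
  case (Cons x w)
  show ?case
  proof (cases "w = []")
    case True
    then show ?thesis using Cons.prems(1)[of "[x]"] by simp
  next
    case False
    then have w: "walk_in E w" "{x, hd w} \<in> E" using Cons.prems(2) by (auto simp: walk_in_Cons)
    obtain p where p: "walk_in E p" "distinct p" "hd p = hd w" "last p = last w"
      "set p \<subseteq> set w" "walk_edges p \<subseteq> walk_edges w" "length p \<le> length w"
      using Cons.IH[OF _ w(1)] by blast
    have p_ne: "p \<noteq> []" using p(1) by (simp add: walk_in_def)
    have edges: "walk_edges (x # w) = insert {x, hd w} (walk_edges w)"
      using False by (rule walk_edges_Cons)
    show ?thesis
    proof (cases "x \<in> set p")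
      case True
      then obtain a b where ab: "p = a @ x # b" by (metis split_list)
      have "walk_in E (x # b)" using p(1) ab walk_in_suffix by blast
      moreover have "walk_edges (x # b) \<subseteq> walk_edges (x # w)"
        using walk_edges_mono_append(2)[of "x # b" a] ab p(6) edges by auto
      moreover have "distinct (x # b)" using p(2) ab by simp
      moreover have "last (x # b) = last (x # w)" using p(4) ab \<open>w \<noteq> []\<close> by simp
      moreover have "set (x # b) \<subseteq> set (x # w)" using p(5) ab by auto
      moreover have "length (x # b) \<le> length (x # w)" using p(7) ab by simp
      ultimately show ?thesis using Cons.prems(1)[of "x # b"] by simp
    next
      case False
      have "walk_in E (x # p)" using p(1,3) p_ne w(2) by (simp add: walk_in_Cons)
      moreover have "walk_edges (x # p) \<subseteq> walk_edges (x # w)"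
        using p(3,6) p_ne edges by (simp add: walk_edges_Cons) blast
      moreover have "last (x # p) = last (x # w)" using p(4) p_ne \<open>w \<noteq> []\<close> by simp
      moreover have "set (x # p) \<subseteq> set (x # w)" using p(5) by auto
      moreover have "length (x # p) \<le> length (x # w)" using p(7) by simp
      ultimately show ?thesis using Cons.prems(1)[of "x # p"] p(2,3) False by simp
    qed
  qed
qed (simp add: walk_in_def)

lemma edge_in_walk_Cons:
  assumes "{x, y} \<in> walk_edges (x # w)" "x \<notin> set w"
  shows "w \<noteq> [] \<and> hd w = y"
proof -
  have "w \<noteq> []" using assms(1) by (cases w) auto
  moreover have "{x, y} \<notin> walk_edges w" using assms(2) walk_edges_subset_set by blast
  ultimately have "{x, y} = {x, hd w}" using assms(1) by (simp add: walk_edges_Cons)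
  then show ?thesis using \<open>w \<noteq> []\<close> assms(2) hd_in_set[of w] by (auto simp: doubleton_eq_iff)
qed

lemma subwalk_forward:
  assumes "walk_in E (xs @ a # ys)" "b \<in> set (a # ys)"
  shows "\<exists>w. walk_in E w \<and> hd w = a \<and> last w = b \<and> walk_edges w \<subseteq> walk_edges (xs @ a # ys)"
proof -
  obtain zs zs' where split: "a # ys = zs @ b # zs'" using assms(2) by (metis split_list)
  have "walk_in E ((zs @ [b]) @ zs')" using walk_in_suffix[OF assms(1)] split by simp
  then have "walk_in E (zs @ [b])" by (rule walk_in_prefix) simp
  moreover have "walk_edges (zs @ [b]) \<subseteq> walk_edges (xs @ a # ys)"
    using walk_edges_mono_append(1)[of "zs @ [b]" zs'] walk_edges_mono_append(2)[of "a # ys" xs] split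
    by auto
  moreover have "hd (zs @ [b]) = a" using split by (cases zs) auto
  ultimately show ?thesis by (intro exI[of _ "zs @ [b]"]) simp
qed

lemma subwalk_between:
  assumes "walk_in E xs" "a \<in> set xs" "b \<in> set xs"
  shows "\<exists>w. walk_in E w \<and> hd w = a \<and> last w = b \<and> walk_edges w \<subseteq> walk_edges xs"
proof -
  obtain ys zs where xs: "xs = ys @ a # zs" using assms(2) by (metis split_list)
  show ?thesis
  proof (cases "b \<in> set (a # zs)")
    case True
    then show ?thesis using subwalk_forward[of E ys a zs b] assms(1) xs by simp
  next
    case False
    then obtain ys1 ys2 where "ys = ys1 @ b # ys2" using assms(3) xs by (auto dest: split_list)
    then have xs': "xs = ys1 @ b # (ys2 @ a # zs)" using xs by simp
    then obtain w where w: "walk_in E w" "hd w = b" "last w = a" "walk_edges w \<subseteq> walk_edges xs"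
      using subwalk_forward[of E ys1 b "ys2 @ a # zs" a] assms(1) by auto
    then have "w \<noteq> []" by (simp add: walk_in_def)
    then show ?thesis using w
      by (intro exI[of _ "rev w"]) (simp add: hd_rev last_rev walk_edges_rev)
  qed
qed

definition walk_to :: "'a set set \<Rightarrow> 'a set \<Rightarrow> 'a \<Rightarrow> nat \<Rightarrow> bool" where
  "walk_to E S v n \<longleftrightarrow> (\<exists>w. walk_in E w \<and> hd w = v \<and> last w \<in> S \<and> length w = Suc n)"

definition walk_dist :: "'a set set \<Rightarrow> 'a set \<Rightarrow> 'a \<Rightarrow> nat" where
  "walk_dist E S v = (LEAST n. walk_to E S v n)"

lemma walk_to_walk_dist: "walk_to E S v n \<Longrightarrow> walk_to E S v (walk_dist E S v)"
  unfolding walk_dist_def by (rule LeastI)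

lemma walk_dist_le: "walk_to E S v n \<Longrightarrow> walk_dist E S v \<le> n"
  unfolding walk_dist_def by (rule Least_le)

lemma walk_to_0: "walk_to E S v 0 \<longleftrightarrow> v \<in> S"
proof
  assume "walk_to E S v 0"
  then obtain w where "hd w = v" "last w \<in> S" "length w = 1" unfolding walk_to_def by auto
  then show "v \<in> S" by (cases w) auto
qed (auto simp: walk_to_def intro: exI[of _ "[v]"])

lemma walk_dist_eq_0: "walk_to E S v n \<Longrightarrow> walk_dist E S v = 0 \<longleftrightarrow> v \<in> S"
  using walk_to_walk_dist walk_dist_le[of E S v 0] by (metis le_zero_eq walk_to_0)

lemma walk_to_Cons: "{v, z} \<in> E \<Longrightarrow> walk_to E S z n \<Longrightarrow> walk_to E S v (Suc n)"
proof -
  assume e: "{v, z} \<in> E" and "walk_to E S z n"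
  then obtain w where w: "walk_in E w" "hd w = z" "last w \<in> S" "length w = Suc n"
    unfolding walk_to_def by blast
  then have "w \<noteq> []" by (simp add: walk_in_def)
  then show ?thesis unfolding walk_to_def using w e by (intro exI[of _ "v # w"]) (simp add: walk_in_Cons)
qed

lemma walk_to_SucD: "walk_to E S v (Suc n) \<Longrightarrow> \<exists>z. {v, z} \<in> E \<and> walk_to E S z n"
proof -
  assume "walk_to E S v (Suc n)"
  then obtain w where w: "walk_in E w" "hd w = v" "last w \<in> S" "length w = Suc (Suc n)"
    unfolding walk_to_def by blast
  then obtain z rest where wz: "w = v # z # rest" by (auto simp: length_Suc_conv)
  then have "{v, z} \<in> E" "walk_to E S z n"
    using w unfolding walk_to_def by (auto simp: walk_in_Cons intro!: exI[of _ "z # rest"])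
  then show ?thesis by blast
qed

lemma walk_dist_edge: "{v, z} \<in> E \<Longrightarrow> walk_to E S z n \<Longrightarrow> walk_dist E S v \<le> Suc (walk_dist E S z)"
  by (meson walk_to_Cons walk_to_walk_dist walk_dist_le)

text \<open>Going back and forth along an edge lengthens a walk by two.\<close>
lemma walk_to_bounce: "walk_to E S z n \<Longrightarrow> {z, y} \<in> E \<Longrightarrow> walk_to E S z (n + 2 * k)"
proof (induction k)
  case (Suc k)
  then have "walk_to E S y (Suc (n + 2 * k))" by (simp add: walk_to_Cons insert_commute)
  then show ?case using walk_to_Cons[OF Suc.prems(2)] by simp
qed simp

definition shortest_walk :: "'a set set \<Rightarrow> 'a set \<Rightarrow> 'a \<Rightarrow> 'a list \<Rightarrow> bool" where
  "shortest_walk E S v w \<longleftrightarrow>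
     walk_in E w \<and> hd w = v \<and> last w \<in> S \<and> length w = Suc (walk_dist E S v)"

lemma shortest_walk_exists: "walk_to E S v n \<Longrightarrow> \<exists>w. shortest_walk E S v w"
  using walk_to_walk_dist[of E S v n] unfolding walk_to_def shortest_walk_def by blast

lemma shortest_walk_nth:
  assumes "shortest_walk E S v w" "i < length w"
  shows "walk_dist E S (w ! i) \<le> walk_dist E S v - i"
proof -
  have w: "walk_in E w" "hd w = v" "last w \<in> S" "length w = Suc (walk_dist E S v)"
    using assms(1) unfolding shortest_walk_def by auto
  have "walk_in E (drop i w)" using w(1) walk_in_suffix[of E "take i w" "drop i w"] assms(2) by simp
  moreover have "hd (drop i w) = w ! i" using assms(2) by (simp add: hd_drop_conv_nth)
  moreover have "last (drop i w) = last w" using assms(2) by simp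
  moreover have "length (drop i w) = Suc (walk_dist E S v - i)" using assms(2) w(4) by simp
  ultimately have "walk_to E S (w ! i) (walk_dist E S v - i)"
    unfolding walk_to_def using w(3) by (intro exI[of _ "drop i w"]) simp
  then show ?thesis by (rule walk_dist_le)
qed

lemma shortest_walk_set:
  assumes "shortest_walk E S v w"
  shows "z \<in> set w \<Longrightarrow> walk_dist E S z \<le> walk_dist E S v"
    and "z \<in> set (tl w) \<Longrightarrow> walk_dist E S z < walk_dist E S v"
proof -
  assume "z \<in> set w"
  then obtain i where "i < length w" "z = w ! i" by (metis in_set_conv_nth)
  then show "walk_dist E S z \<le> walk_dist E S v" using shortest_walk_nth[OF assms] by force
next
  assume "z \<in> set (tl w)"
  then obtain j where "j < length (tl w)" "z = tl w ! j" by (metis in_set_conv_nth)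
  then have j: "Suc j < length w" "z = w ! Suc j" by (auto simp: nth_tl)
  moreover have "length w = Suc (walk_dist E S v)" using assms unfolding shortest_walk_def by simp
  ultimately show "walk_dist E S z < walk_dist E S v" using shortest_walk_nth[OF assms j(1)] by simp
qed

lemma shortest_walk_avoids_edge:
  assumes A: "shortest_walk E S x A" and far: "walk_dist E S x \<le> walk_dist E S y"
  shows "{x, y} \<notin> walk_edges A"
proof
  assume used: "{x, y} \<in> walk_edges A"
  have A_ne: "A \<noteq> []" "hd A = x" using A unfolding shortest_walk_def walk_in_def by auto
  then have A_eq: "A = x # tl A" by (cases A) auto
  have "x \<notin> set (tl A)" using shortest_walk_set(2)[OF A, of x] by blast
  then have "tl A \<noteq> [] \<and> hd (tl A) = y" using edge_in_walk_Cons[of x y "tl A"] used A_eq by simp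
  then have "y \<in> set (tl A)" using hd_in_set[of "tl A"] by simp
  then show False using shortest_walk_set(2)[OF A, of y] far by simp
qed

lemma walk_dist_predecessor:
  assumes "walk_to E S v n" "walk_dist E S v = Suc k"
  shows "\<exists>z. {v, z} \<in> E \<and> walk_to E S z k \<and> walk_dist E S z = k"
proof -
  obtain z where z: "{v, z} \<in> E" "walk_to E S z k"
    using walk_to_SucD walk_to_walk_dist[OF assms(1)] assms(2) by metis
  have "walk_dist E S z = k"
    using walk_dist_le[OF z(2)] walk_dist_edge[OF z] assms(2) by simp
  then show ?thesis using z by blast
qed

lemma dist_to_walk_dist:
  assumes "graph V E" "dist_to V E v S n"
  shows "walk_dist E S v = n"
proof -
  obtain p where p: "path V E p" "hd p = v" "last p \<in> S" "length p = Suc n"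
    using assms(2) unfolding dist_to_def by blast
  have v: "v \<in> V" using p(1,2) by (auto simp: path_iff_walk_in walk_in_def)
  have walk_n: "walk_to E S v n"
    unfolding walk_to_def using p path_iff_walk_in by blast
  have "\<not> walk_dist E S v < n"
  proof
    assume less: "walk_dist E S v < n"
    obtain w where w: "walk_in E w" "hd w = v" "last w \<in> S" "length w = Suc (walk_dist E S v)"
      using walk_to_walk_dist[OF walk_n] unfolding walk_to_def by blast
    obtain q where q: "walk_in E q" "distinct q" "hd q = v" "last q \<in> S" "set q \<subseteq> set w"
      "length q \<le> length w"
      using walk_shortcut[OF w(1)] w(2,3) by metis
    have "set w \<subseteq> V" using walk_in_vertices[OF assms(1) w(1)] w(2) v by simp
    then have "path V E q" using q(1,2,5) path_iff_walk_in by blast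
    moreover have "length q = Suc (length q - 1)" "length q - 1 < n"
      using q(1,6) w(4) less by (auto simp: walk_in_def)
    ultimately have "\<exists>xs. path V E xs \<and> hd xs = v \<and> last xs \<in> S \<and> length xs = Suc (length q - 1)"
      using q(3,4) by blast
    then show False using \<open>length q - 1 < n\<close> assms(2) unfolding dist_to_def by blast
  qed
  then show ?thesis using walk_dist_le[OF walk_n] by simp
qed

text \<open>In a connected graph, a vertex of a triangle reaches any fixed vertex \<open>u\<close> by walks of
  every length \<open>\<ge> |V| + 1\<close>: a path of length \<open>l < |V|\<close> gives the parity of \<open>l\<close>, a detour
  around the triangle the other parity, and bouncing along an edge adds any even length.\<close>
lemma triangle_walks_to:
  assumes g: "graph V E" and c: "connected_graph V E" and u: "u \<in> V"
    and tri: "{a, b} \<in> E" "{b, c} \<in> E" "{a, c} \<in> E"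
    and n: "n \<ge> card V + 1"
  shows "walk_to E {u} a n"
proof -
  have "a \<in> V" using graph_edge[OF g tri(1)] by blast
  then obtain p where p: "path V E p" "hd p = a" "last p = u"
    using c u unfolding connected_graph_def by blast
  have p': "walk_in E p" "distinct p" "set p \<subseteq> V" using p(1) by (auto simp: path_iff_walk_in)
  have "length p = card (set p)" using p'(2) by (simp add: distinct_card)
  also have "\<dots> \<le> card V" using g p'(3) by (simp add: card_mono graph_def)
  finally have len: "length p \<le> card V" .
  define l where "l = length p - 1"
  have "length p = Suc l" using p' l_def by (cases p) (auto simp: walk_in_def)
  then have short: "walk_to E {u} a l" unfolding walk_to_def using p p' by blast
  have "walk_to E {u} c (Suc l)" using walk_to_Cons[OF _ short, of c] tri(3) by (simp add: insert_commute)
  then have "walk_to E {u} b (Suc (Suc l))" using walk_to_Cons[of b c] tri(2) by simp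
  then have detour: "walk_to E {u} a (l + 3)" using walk_to_Cons[of a b] tri(1) by (simp add: numeral_3_eq_3)
  have "n \<ge> l + 2" using n len \<open>length p = Suc l\<close> by simp
  then have "(\<exists>k. n = l + 2 * k) \<or> (\<exists>k. n = (l + 3) + 2 * k)" by presburger
  then show ?thesis using walk_to_bounce[OF short tri(1)] walk_to_bounce[OF detour tri(1)] by blast
qed

text \<open>The invariant for the image of a vertex at level \<open>k\<close>: it is not isolated and, while
  \<open>k \<le> r\<close>, it still reaches \<open>u\<close> by a walk of exactly \<open>r - k\<close> steps.\<close>
definition approaching :: "'b set set \<Rightarrow> 'b \<Rightarrow> nat \<Rightarrow> nat \<Rightarrow> 'b \<Rightarrow> bool" where
  "approaching E u r k y \<longleftrightarrow> (\<exists>z. {y, z} \<in> E) \<and> (k \<le> r \<longrightarrow> walk_to E {u} y (r - k))"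

lemma approaching_step:
  assumes "approaching E u r k y"
  shows "\<exists>y'. {y, y'} \<in> E \<and> approaching E u r (Suc k) y'"
proof (cases "Suc k \<le> r")
  case True
  have "walk_to E {u} y (r - k)" using assms True unfolding approaching_def by simp
  moreover have "r - k = Suc (r - Suc k)" using True by arith
  ultimately have "walk_to E {u} y (Suc (r - Suc k))" by simp
  then obtain y' where y': "{y, y'} \<in> E" "walk_to E {u} y' (r - Suc k)"
    using walk_to_SucD[of E "{u}" y] by blast
  then have "{y', y} \<in> E" by (simp add: insert_commute)
  then show ?thesis unfolding approaching_def using y' by blast
next
  case False
  obtain y' where y': "{y, y'} \<in> E" using assms unfolding approaching_def by blast
  then have "{y', y} \<in> E" by (simp add: insert_commute)
  then show ?thesis unfolding approaching_def using y' False by blast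
qed

lemma approaching_final: "approaching E u r r y \<Longrightarrow> y = u"
  unfolding approaching_def by (simp add: walk_to_0)

lemma triangle_edge:
  assumes "{a\<^sub>1, a\<^sub>2} \<in> E" "{a\<^sub>2, a\<^sub>3} \<in> E" "{a\<^sub>1, a\<^sub>3} \<in> E"
    and "p \<in> {a\<^sub>1, a\<^sub>2, a\<^sub>3}" "q \<in> {a\<^sub>1, a\<^sub>2, a\<^sub>3}" "p \<noteq> q"
  shows "{p, q} \<in> E"
  using assms by (auto simp: insert_commute)

lemma triangle_approaching:
  assumes g: "graph V E" and c: "connected_graph V E" and u: "u \<in> V"
    and tri: "{a\<^sub>1, a\<^sub>2} \<in> E" "{a\<^sub>2, a\<^sub>3} \<in> E" "{a\<^sub>1, a\<^sub>3} \<in> E"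
    and a: "a \<in> {a\<^sub>1, a\<^sub>2, a\<^sub>3}" and r: "r \<ge> card V + 1"
  shows "approaching E u r 0 a"
proof -
  have "a\<^sub>1 \<noteq> a\<^sub>2" "a\<^sub>2 \<noteq> a\<^sub>3" "a\<^sub>1 \<noteq> a\<^sub>3" using tri graph_edge[OF g] by blast+
  then obtain b c where bc: "b \<in> {a\<^sub>1, a\<^sub>2, a\<^sub>3}" "c \<in> {a\<^sub>1, a\<^sub>2, a\<^sub>3}" "a \<noteq> b" "b \<noteq> c" "a \<noteq> c"
    using a by auto
  then have "{a, b} \<in> E" "{b, c} \<in> E" "{a, c} \<in> E"
    using triangle_edge[OF tri] a by blast+
  then show ?thesis using triangle_walks_to[OF g c u] r unfolding approaching_def by auto
qed

definition triangle_colour :: "nat \<Rightarrow> 'b \<Rightarrow> 'b \<Rightarrow> 'b \<Rightarrow> nat \<Rightarrow> 'b" where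
  "triangle_colour n a\<^sub>1 a\<^sub>2 a\<^sub>3 i = (if i = n - 1 \<and> odd n then a\<^sub>3 else if even i then a\<^sub>1 else a\<^sub>2)"

lemma triangle_colour_proper:
  assumes "n \<ge> 3" "i < n" "a\<^sub>1 \<noteq> a\<^sub>2" "a\<^sub>2 \<noteq> a\<^sub>3" "a\<^sub>1 \<noteq> a\<^sub>3"
  shows "triangle_colour n a\<^sub>1 a\<^sub>2 a\<^sub>3 i \<noteq> triangle_colour n a\<^sub>1 a\<^sub>2 a\<^sub>3 (Suc i mod n)"
proof (cases "i = n - 1")
  case True
  then have "Suc i mod n = 0" using assms by simp
  then show ?thesis using True assms unfolding triangle_colour_def by auto
next
  case False
  then have "Suc i mod n = Suc i" using assms by simp
  then show ?thesis using False assms unfolding triangle_colour_def by auto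
qed

lemma cycle_triangle_colouring:
  assumes cs: "distinct cs" "length cs \<ge> 3"
    and tri: "{a\<^sub>1, a\<^sub>2} \<in> E" "{a\<^sub>2, a\<^sub>3} \<in> E" "{a\<^sub>1, a\<^sub>3} \<in> E" "a\<^sub>1 \<noteq> a\<^sub>2" "a\<^sub>2 \<noteq> a\<^sub>3" "a\<^sub>1 \<noteq> a\<^sub>3"
  obtains col where "\<And>v. col v \<in> {a\<^sub>1, a\<^sub>2, a\<^sub>3}"
    and "\<And>x y. {x, y} \<in> cycle_edges cs \<Longrightarrow> {col x, col y} \<in> E"
proof
  define n where "n = length cs"
  define col where "col v = triangle_colour n a\<^sub>1 a\<^sub>2 a\<^sub>3 (the_inv_into {..<n} ((!) cs) v)" for v
  have col_nth: "col (cs ! i) = triangle_colour n a\<^sub>1 a\<^sub>2 a\<^sub>3 i" if "i < n" for i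
    using that cs(1) unfolding col_def n_def by (simp add: the_inv_into_f_f inj_on_nth)
  show col_in: "col v \<in> {a\<^sub>1, a\<^sub>2, a\<^sub>3}" for v
    unfolding col_def triangle_colour_def by simp
  show "{col x, col y} \<in> E" if "{x, y} \<in> cycle_edges cs" for x y
  proof -
    have "\<exists>i. i < n \<and> {x, y} = {cs ! i, cs ! (Suc i mod n)}"
      using that unfolding cycle_edges_def n_def by (simp add: conj_commute)
    then obtain i where i: "i < n" "{x, y} = {cs ! i, cs ! (Suc i mod n)}" by (elim exE conjE)
    have "Suc i mod n < n" using i(1) by simp
    then have "col (cs ! i) \<noteq> col (cs ! (Suc i mod n))"
      using col_nth i(1) triangle_colour_proper[of n i] cs(2) tri(4-6) n_def by simp
    then have edge: "{col (cs ! i), col (cs ! (Suc i mod n))} \<in> E"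
      using triangle_edge[OF tri(1-3) col_in col_in] by blast
    from i(2) have "x = cs ! i \<and> y = cs ! (Suc i mod n) \<or> x = cs ! (Suc i mod n) \<and> y = cs ! i"
      by (simp add: doubleton_eq_iff)
    then show ?thesis using edge by (elim disjE) (simp_all add: insert_commute)
  qed
qed

text \<open>Given a level function \<open>L\<close> with a parent map \<open>p\<close> lowering the level by one, a map
  is defined level by level: level-0 vertices get a prescribed value, and every other vertex
  is mapped to a neighbour of the image of its parent, chosen so as to maintain an
  invariant \<open>P\<close>.\<close>
primrec along_parents :: "('a \<Rightarrow> 'b) \<Rightarrow> (nat \<Rightarrow> 'b \<Rightarrow> 'b) \<Rightarrow> ('a \<Rightarrow> 'a) \<Rightarrow> nat \<Rightarrow> 'a \<Rightarrow> 'b" where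
  "along_parents b advance p 0 v = b v"
| "along_parents b advance p (Suc k) v = advance k (along_parents b advance p k (p v))"

lemma extend_along_parents:
  assumes parent: "\<And>v k. L v = Suc k \<Longrightarrow> L (p v) = k"
    and base: "\<And>v. L v = 0 \<Longrightarrow> P 0 (b v)"
    and step: "\<And>k y. P k y \<Longrightarrow> \<exists>y'. {y, y'} \<in> E \<and> P (Suc k) y'"
  obtains h where "\<And>v. P (L v) (h v)"
    and "\<And>v k. L v = Suc k \<Longrightarrow> {h (p v), h v} \<in> E"
    and "\<And>v. L v = 0 \<Longrightarrow> h v = b v"
proof
  define advance where "advance k y = (SOME y'. {y, y'} \<in> E \<and> P (Suc k) y')" for k y
  have advance: "{y, advance k y} \<in> E \<and> P (Suc k) (advance k y)" if "P k y" for k y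
    unfolding advance_def by (rule someI_ex[OF step[OF that]])
  have inv: "P k (along_parents b advance p k v)" if "L v = k" for k v
    using that
  proof (induction k arbitrary: v)
    case (Suc k)
    then show ?case using advance parent by simp
  qed (simp add: base)
  define h where "h v = along_parents b advance p (L v) v" for v
  show "P (L v) (h v)" for v unfolding h_def by (rule inv) simp
  show "{h (p v), h v} \<in> E" if "L v = Suc k" for v k
  proof -
    have "P k (along_parents b advance p k (p v))" using inv parent[OF that] by blast
    then show ?thesis using advance that parent[OF that] unfolding h_def by simp
  qed
  show "h v = b v" if "L v = 0" for v using that unfolding h_def by simp
qed

lemma cycle_edges_last_hd: "p \<noteq> [] \<Longrightarrow> {last p, hd p} \<in> cycle_edges p"
proof -
  assume p: "p \<noteq> []"
  define i where "i = length p - 1"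
  have "i < length p" "Suc i mod length p = 0" "p ! i = last p" "p ! 0 = hd p"
    using p by (auto simp: i_def last_conv_nth hd_conv_nth)
  then show ?thesis unfolding cycle_edges_def by force
qed

lemma cycle_edges_subset_set: "e \<in> cycle_edges cs \<Longrightarrow> e \<subseteq> set cs"
proof -
  assume "e \<in> cycle_edges cs"
  then obtain i where i: "i < length cs" "e = {cs ! i, cs ! (Suc i mod length cs)}"
    unfolding cycle_edges_def by blast
  have "0 < length cs" using i(1) by linarith
  then have "Suc i mod length cs < length cs" by (rule mod_less_divisor)
  then show ?thesis using i by auto
qed

lemma walk_edges_cycle_edges: "walk_edges cs \<subseteq> cycle_edges cs"
proof
  fix e assume "e \<in> walk_edges cs"
  then obtain i where i: "Suc i < length cs" "e = {cs ! i, cs ! Suc i}" by (auto simp: walk_edges_nth)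
  then have "i < length cs \<and> e = {cs ! i, cs ! (Suc i mod length cs)}" by simp
  then show "e \<in> cycle_edges cs" unfolding cycle_edges_def by blast
qed

locale unicyclic_graph =
  fixes V :: "'a set" and E :: "'a set set" and cs :: "'a list"
  assumes graph: "graph V E"
    and cycle: "cycle_list V E cs"
    and unique_cycle: "cycles V E = {(set cs, cycle_edges cs)}"
begin

lemma cycle_walk: "walk_in E cs"
  using cycle unfolding cycle_list_def path_iff_walk_in by blast

lemma closing_edge_on_cycle:
  assumes e: "{x, y} \<in> E" and w: "walk_in E w" "hd w = x" "last w = y"
    and avoid: "{x, y} \<notin> walk_edges w"
  shows "{x, y} \<in> cycle_edges cs"
proof -
  obtain p where p: "walk_in E p" "distinct p" "hd p = x" "last p = y" "walk_edges p \<subseteq> walk_edges w"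
    using walk_shortcut[OF w(1)] w(2,3) by metis
  have xy: "x \<in> V" "x \<noteq> y" using graph_edge[OF graph e] by auto
  have p_ne: "p \<noteq> []" using p(1) by (simp add: walk_in_def)
  have "length p \<ge> 3"
  proof (rule ccontr)
    assume "\<not> 3 \<le> length p"
    moreover have "length p \<noteq> 0" using p_ne by simp
    ultimately have "length p = 1 \<or> length p = 2" by linarith
    then show False
    proof
      assume "length p = 1"
      then show False using p(3,4) xy(2) by (cases p) auto
    next
      assume "length p = 2"
      then obtain a b where "p = [a, b]" by (auto simp: length_Suc_conv numeral_2_eq_2)
      then show False using p(3-5) avoid by auto
    qed
  qed
  moreover have "path V E p"
    using p walk_in_vertices[OF graph p(1)] xy(1) by (simp add: path_iff_walk_in)
  moreover have "{last p, hd p} \<in> E" using p(3,4) e by (simp add: insert_commute)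
  ultimately have "(set p, cycle_edges p) \<in> cycles V E"
    unfolding cycles_def cycle_list_def by blast
  then have "cycle_edges p = cycle_edges cs" using unique_cycle by simp
  then show ?thesis using cycle_edges_last_hd[OF p_ne] p(3,4) by (simp add: insert_commute)
qed

lemma cycle_arc:
  assumes "a \<in> set cs" "b \<in> set cs"
  shows "\<exists>w. walk_in E w \<and> hd w = a \<and> last w = b \<and> walk_edges w \<subseteq> cycle_edges cs"
  using subwalk_between[OF cycle_walk assms] walk_edges_cycle_edges by blast

text \<open>Every vertex gets a set of anchors from which its level is measured: the vertices of
  the cycle if it can reach the cycle, and otherwise one chosen vertex of its component
  (which is then a tree).\<close>
definition reaches_cycle :: "'a \<Rightarrow> bool" where
  "reaches_cycle v \<longleftrightarrow> (\<exists>n. walk_to E (set cs) v n)"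

definition component :: "'a \<Rightarrow> 'a set" where
  "component v = {z. \<exists>w. walk_in E w \<and> hd w = v \<and> last w = z}"

definition anchors :: "'a \<Rightarrow> 'a set" where
  "anchors v = (if reaches_cycle v then set cs else {SOME z. z \<in> component v})"

definition level :: "'a \<Rightarrow> nat" where
  "level v = walk_dist E (anchors v) v"

definition parent :: "'a \<Rightarrow> 'a" where
  "parent v = (SOME z. {v, z} \<in> E \<and> Suc (level z) = level v)"

lemma component_edge: "{x, y} \<in> E \<Longrightarrow> component y \<subseteq> component x"
proof
  fix z assume e: "{x, y} \<in> E" and "z \<in> component y"
  then obtain w where w: "walk_in E w" "hd w = y" "last w = z" unfolding component_def by blast
  then have "w \<noteq> []" by (simp add: walk_in_def)
  then show "z \<in> component x"
    using w e unfolding component_def by (auto simp: walk_in_Cons intro!: exI[of _ "x # w"])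
qed

lemma anchors_edge: "{x, y} \<in> E \<Longrightarrow> anchors x = anchors y"
proof -
  assume e: "{x, y} \<in> E"
  then have e': "{y, x} \<in> E" by (simp add: insert_commute)
  have "reaches_cycle x \<longleftrightarrow> reaches_cycle y"
    unfolding reaches_cycle_def using walk_to_Cons[OF e, of "set cs"] walk_to_Cons[OF e', of "set cs"]
    by blast
  moreover have "component x = component y" using component_edge[OF e] component_edge[OF e'] by blast
  ultimately show ?thesis unfolding anchors_def by simp
qed

lemma walk_to_anchors: "\<exists>n. walk_to E (anchors v) v n"
proof (cases "reaches_cycle v")
  case True
  then show ?thesis unfolding anchors_def reaches_cycle_def by simp
next
  case False
  have "v \<in> component v" unfolding component_def by (auto intro: exI[of _ "[v]"])
  then have "(SOME z. z \<in> component v) \<in> component v" by (rule someI)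
  then obtain w where w: "walk_in E w" "hd w = v" "last w = (SOME z. z \<in> component v)"
    unfolding component_def by blast
  then have "length w = Suc (length w - 1)" by (cases w) (auto simp: walk_in_def)
  then have "walk_to E (anchors v) v (length w - 1)"
    unfolding walk_to_def anchors_def using w False by auto
  then show ?thesis by blast
qed

lemma anchors_linked:
  assumes "a \<in> anchors v" "b \<in> anchors v"
  shows "\<exists>w. walk_in E w \<and> hd w = a \<and> last w = b \<and> walk_edges w \<subseteq> cycle_edges cs"
proof (cases "reaches_cycle v")
  case True
  then show ?thesis using cycle_arc assms unfolding anchors_def by simp
next
  case False
  then have "a = b" using assms unfolding anchors_def by simp
  then show ?thesis by (intro exI[of _ "[a]"]) simp
qed

lemma cycle_vertex_level: "v \<in> set cs \<Longrightarrow> anchors v = set cs \<and> level v = 0"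
proof -
  assume v: "v \<in> set cs"
  then have "walk_to E (set cs) v 0" by (simp add: walk_to_0)
  then have "reaches_cycle v" "walk_dist E (set cs) v = 0"
    unfolding reaches_cycle_def using walk_dist_eq_0[of E "set cs" v 0] v by blast+
  then show ?thesis unfolding level_def anchors_def by simp
qed

lemma level_edge: "{x, y} \<in> E \<Longrightarrow> level x \<le> Suc (level y)"
proof -
  assume e: "{x, y} \<in> E"
  obtain n where "walk_to E (anchors y) y n" using walk_to_anchors by blast
  then have "walk_dist E (anchors y) x \<le> Suc (walk_dist E (anchors y) y)" by (rule walk_dist_edge[OF e])
  then show ?thesis unfolding level_def using anchors_edge[OF e] by simp
qed

lemma parent_edge:
  assumes "level v = Suc k"
  shows "{v, parent v} \<in> E \<and> level (parent v) = k"
proof -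
  obtain n where n: "walk_to E (anchors v) v n" using walk_to_anchors by blast
  obtain z where z: "{v, z} \<in> E" "walk_dist E (anchors v) z = k"
    using walk_dist_predecessor[OF n] assms unfolding level_def by blast
  then have "level z = k" unfolding level_def using anchors_edge[OF z(1)] by simp
  then have "\<exists>z. {v, z} \<in> E \<and> Suc (level z) = level v" using z(1) assms by auto
  then have "{v, parent v} \<in> E \<and> Suc (level (parent v)) = level v"
    unfolding parent_def by (rule someI_ex)
  then show ?thesis using assms by simp
qed

text \<open>If the endpoints of an edge \<open>xy\<close> both walk to the anchors of some vertex without using
  \<open>xy\<close>, then, joining the two walks along the cycle, \<open>xy\<close> is seen to close a cycle.\<close>
lemma edge_between_anchor_walks:
  assumes e: "{x, y} \<in> E"
    and A: "walk_in E A" "hd A = x" "last A \<in> anchors v"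
    and B: "walk_in E B" "hd B = y" "last B \<in> anchors v"
    and avoid: "{x, y} \<notin> walk_edges A" "{x, y} \<notin> walk_edges B"
  shows "{x, y} \<in> cycle_edges cs"
proof -
  obtain c where c: "walk_in E c" "hd c = last A" "last c = last B" "walk_edges c \<subseteq> cycle_edges cs"
    using anchors_linked[OF A(3) B(3)] by blast
  have B_ne: "B \<noteq> []" using B(1) by (simp add: walk_in_def)
  have rev_B: "walk_in E (rev B)" "hd (rev B) = last B" "last (rev B) = y"
    using B B_ne by (simp_all add: hd_rev last_rev)
  define cB where "cB = c @ tl (rev B)"
  have cB: "walk_in E cB" "walk_edges cB = walk_edges c \<union> walk_edges B" "hd cB = last A" "last cB = y"
    using walk_join[OF c(1) rev_B(1)] c(2,3) rev_B(2,3) unfolding cB_def by (simp_all add: walk_edges_rev)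
  define W where "W = A @ tl cB"
  have W: "walk_in E W" "walk_edges W = walk_edges A \<union> walk_edges c \<union> walk_edges B" "hd W = x" "last W = y"
    using walk_join[OF A(1) cB(1)] cB(2-4) A(2) unfolding W_def by auto
  show ?thesis
  proof (cases "{x, y} \<in> walk_edges W")
    case True
    then show ?thesis using W(2) avoid c(4) by blast
  next
    case False
    then show ?thesis using closing_edge_on_cycle[OF e W(1,3,4)] by blast
  qed
qed

lemma lower_neighbour_is_parent:
  assumes e: "{x, y} \<in> E" and lev: "level x = Suc (level y)"
  shows "y = parent x"
proof (rule ccontr)
  assume ne: "y \<noteq> parent x"
  define S where "S = anchors x"
  define q where "q = parent x"
  have q: "{x, q} \<in> E" "level q = level y" using parent_edge[OF lev] unfolding q_def by auto
  have anchors: "anchors q = S" "anchors y = S"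
    using anchors_edge[OF q(1)] anchors_edge[OF e] unfolding S_def by auto
  have dist: "walk_dist E S x = Suc (walk_dist E S y)" "walk_dist E S q = walk_dist E S y"
    using lev q(2) anchors unfolding level_def S_def by simp_all
  obtain P where P: "shortest_walk E S q P"
    using walk_to_anchors[of q] shortest_walk_exists anchors(1) by metis
  obtain B where B: "shortest_walk E S y B"
    using walk_to_anchors[of y] shortest_walk_exists anchors(2) by metis
  have P_walk: "walk_in E P" "P \<noteq> []" "hd P = q" "last P \<in> S"
    using P unfolding shortest_walk_def walk_in_def by auto
  have "x \<notin> set P" using shortest_walk_set(1)[OF P, of x] dist by auto
  then have avoid_A: "{x, y} \<notin> walk_edges (x # P)" using edge_in_walk_Cons[of x y P] P_walk(3) ne q_def by blast
  have avoid_B: "{x, y} \<notin> walk_edges B"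
    using shortest_walk_avoids_edge[OF B, of x] dist by (simp add: insert_commute)
  have "walk_in E (x # P)" "hd (x # P) = x" "last (x # P) \<in> anchors x"
    using P_walk q(1) unfolding S_def by (simp_all add: walk_in_Cons)
  moreover have "walk_in E B" "hd B = y" "last B \<in> anchors x"
    using B unfolding shortest_walk_def S_def by auto
  ultimately have "{x, y} \<in> cycle_edges cs"
    using edge_between_anchor_walks[OF e] avoid_A avoid_B by blast
  then have "x \<in> set cs" using cycle_edges_subset_set by blast
  then show False using cycle_vertex_level lev by simp
qed

lemma equal_level_edge_on_cycle:
  assumes e: "{x, y} \<in> E" and lev: "level x = level y"
  shows "{x, y} \<in> cycle_edges cs"
proof -
  define S where "S = anchors x"
  have anchors: "anchors y = S" using anchors_edge[OF e] unfolding S_def by simp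
  have dist: "walk_dist E S x = walk_dist E S y" using lev anchors unfolding level_def S_def by simp
  obtain A where A: "shortest_walk E S x A"
    using walk_to_anchors[of x] shortest_walk_exists unfolding S_def by metis
  obtain B where B: "shortest_walk E S y B"
    using walk_to_anchors[of y] shortest_walk_exists anchors by metis
  have avoid: "{x, y} \<notin> walk_edges A" "{x, y} \<notin> walk_edges B"
    using shortest_walk_avoids_edge[OF A, of y] shortest_walk_avoids_edge[OF B, of x] dist
    by (simp_all add: insert_commute)
  have "walk_in E A" "hd A = x" "last A \<in> anchors x"
    and "walk_in E B" "hd B = y" "last B \<in> anchors x"
    using A B unfolding shortest_walk_def S_def by auto
  then show ?thesis using edge_between_anchor_walks[OF e] avoid by blast
qed

text \<open>Hence a map that sends every parent edge and every cycle edge to an edge of \<open>F\<close> sends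
  every edge to an edge of \<open>F\<close>: the endpoints of an edge differ in level by at most one.\<close>
lemma edge_images:
  assumes parent_edges: "\<And>v k. level v = Suc k \<Longrightarrow> {h (parent v), h v} \<in> F"
    and cycle_edges: "\<And>x y. {x, y} \<in> cycle_edges cs \<Longrightarrow> {h x, h y} \<in> F"
    and e: "{x, y} \<in> E"
  shows "{h x, h y} \<in> F"
proof -
  have e': "{y, x} \<in> E" using e by (simp add: insert_commute)
  have "level x \<le> Suc (level y)" "level y \<le> Suc (level x)"
    using level_edge[OF e] level_edge[OF e'] .
  then consider "level x = Suc (level y)" | "level x = level y" | "level y = Suc (level x)" by linarith
  then show ?thesis
  proof cases
    case 1
    then show ?thesis using parent_edges lower_neighbour_is_parent[OF e] by (metis insert_commute)
  next
    case 2
    then show ?thesis using cycle_edges equal_level_edge_on_cycle[OF e] by blast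
  next
    case 3
    then show ?thesis using parent_edges lower_neighbour_is_parent[OF e'] by metis
  qed
qed

lemma level_at_distance:
  assumes "dist_to V E v (set cs) r"
  shows "level v = r"
proof -
  obtain p where "path V E p" "hd p = v" "last p \<in> set cs" "length p = Suc r"
    using assms unfolding dist_to_def by blast
  then have "reaches_cycle v" unfolding reaches_cycle_def walk_to_def path_iff_walk_in by blast
  then show ?thesis using dist_to_walk_dist[OF graph assms] unfolding level_def anchors_def by simp
qed

end

theorem lemma9:
  fixes VH :: "'b set" and EH :: "'b set set" and u :: 'b
    and VM :: "'a set" and EM :: "'a set set" and C :: "'a set \<times> 'a set set" and r :: nat
  assumes "graph VH EH" and "connected_graph VH EH" and "has_triangle VH EH"
    and "u \<in> VH"
    and "graph VM EM" and "unicyclic_with VM EM C"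
    and "r \<ge> card VH + 3"
  shows "\<exists>h. graph_hom VM EM VH EH h \<and>
           (\<forall>v\<in>VM. dist_to VM EM v (fst C) r \<longrightarrow> h v = u)"
proof -
  obtain cs where C: "C = (set cs, cycle_edges cs)" and cyc: "cycle_list VM EM cs"
    using assms(6) unfolding unicyclic_with_def cycles_def by blast
  interpret M: unicyclic_graph VM EM cs
    using assms(5,6) cyc C by unfold_locales (simp_all add: unicyclic_with_def)
  obtain a\<^sub>1 a\<^sub>2 a\<^sub>3 where tri: "{a\<^sub>1, a\<^sub>2} \<in> EH" "{a\<^sub>2, a\<^sub>3} \<in> EH" "{a\<^sub>1, a\<^sub>3} \<in> EH"
      "a\<^sub>1 \<noteq> a\<^sub>2" "a\<^sub>2 \<noteq> a\<^sub>3" "a\<^sub>1 \<noteq> a\<^sub>3"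
    using assms(3) unfolding has_triangle_def by blast
  have cs: "distinct cs" "length cs \<ge> 3" using cyc unfolding cycle_list_def path_def by simp_all
  obtain col where col: "\<And>v. col v \<in> {a\<^sub>1, a\<^sub>2, a\<^sub>3}"
      "\<And>x y. {x, y} \<in> cycle_edges cs \<Longrightarrow> {col x, col y} \<in> EH"
    using cycle_triangle_colouring[OF cs tri] by blast
  have start: "approaching EH u r 0 (col v)" for v
    using triangle_approaching[OF assms(1,2,4) tri(1-3) col(1)] assms(7) by simp
  obtain h where h: "\<And>v. approaching EH u r (M.level v) (h v)"
      "\<And>v k. M.level v = Suc k \<Longrightarrow> {h (M.parent v), h v} \<in> EH"
      "\<And>v. M.level v = 0 \<Longrightarrow> h v = col v"
    using extend_along_parents[of M.level M.parent "approaching EH u r" col EH,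
        OF conjunct2[OF M.parent_edge] start approaching_step] by blast
  have cycle_hom: "{h x, h y} \<in> EH" if "{x, y} \<in> cycle_edges cs" for x y
    using that col(2) h(3) M.cycle_vertex_level cycle_edges_subset_set[OF that] by simp
  have "{h x, h y} \<in> EH" if "{x, y} \<in> EM" for x y
    using M.edge_images[of h EH x y] h(2) cycle_hom that by blast
  moreover have "h v \<in> VH" for v
    using h(1)[of v] graph_edge[OF assms(1)] unfolding approaching_def by blast
  moreover have "h v = u" if "dist_to VM EM v (fst C) r" for v
    using h(1)[of v] M.level_at_distance[of v r] that C approaching_final by simp
  ultimately show ?thesis unfolding graph_hom_def by blast
qed

end
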